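(* Let $k_1,k_2\ge1$ and $n=2^{k_1k_2}-1$. Suppose $n=n_1n_2$ with $n_1,n_2>1$ relatively prime, and let $\mathcal A=\{0,\dots,n_1-1\}\times\{0,\dots,n_2-1\}$. Let $\Lambda\subseteq\mathbb Z^2$ be a lattice that induces a lattice tiling of $\mathcal A$ and also of a shape $\mathcal S$ (necessarily $|\mathcal S|=n$). Let $\delta$ be a nonzero ternary vector such that $(\Lambda,\mathcal S,\delta)$ defines a folding. Let $s_0s_1\cdots s_{n-1}$ be an m-sequence (a binary maximal-length linear shift register sequence) of period $n$. Fold it into $\mathcal S$ by $\delta$: with folded-row $p_0,p_1,\dots$ of $(\Lambda,\mathcal S,\delta)$, write $s_i$ at $p_i$ for $0\le i<n$. Likewise fold it into $\mathcal A$ by $\delta$ using the folded-row of $(\Lambda,\mathcal A,\delta)$. Then the folded shape $\mathcal S$ has the $k_1\times k_2$ window property if and only if the folded array $\mathcal A$ has the $k_1\times k_2$ window property.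
   Context: A shape is a finite nonempty set $\mathcal S\subset\mathbb Z^2$ containing the origin. A lattice is $\Lambda=\{u_1v_1+u_2v_2:u_i\in\mathbb Z\}$ for linearly independent $v_1,v_2\in\mathbb Z^2$. $\Lambda$ induces a lattice tiling of $\mathcal S$ if the translates $\mathcal S+\lambda$, $\lambda\in\Lambda$, are pairwise disjoint and cover $\mathbb Z^2$. Then $c(x)$ denotes the unique $\lambda\in\Lambda$ with $x\in\mathcal S+\lambda$. For a nonzero $\delta\in\{-1,0,1\}^2$, the folded-row is $p_0=0$, $p_{k+1}=(p_k+\delta)-c(p_k+\delta)$. $(\Lambda,\mathcal S,\delta)$ defines a folding if every point of $\mathcal S$ occurs in the folded-row. When a sequence $s_0\cdots s_{n-1}$ with $n=|\mathcal S|$ is folded into $\mathcal S$, the resulting array is extended periodically to $f:\mathbb Z^2\to\{0,1\}$ by $f(p_i+\lambda)=s_i$ for $0\le i<n$ and $\lambda\in\Lambda$ (i.e. every copy $\mathcal S+\lambda$ repeats the contents of $\mathcal S$). The folded shape has the $k_1\times k_2$ window property if every nonzero binary $k_1\times k_2$ matrix $M$ occurs exactly once as a window, i.e. there is exactly one $x\in\mathcal S$ with $f(x+(r,c))=M_{r,c}$ for all $0\le r<k_1$, $0\le c<k_2$. *)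

theory Defs
  imports Main
begin

type_synonym pt = "int \<times> int"

definition padd :: "pt \<Rightarrow> pt \<Rightarrow> pt" where
  "padd x y = (fst x + fst y, snd x + snd y)"

definition psub :: "pt \<Rightarrow> pt \<Rightarrow> pt" where
  "psub x y = (fst x - fst y, snd x - snd y)"

definition is_shape :: "pt set \<Rightarrow> bool" where
  "is_shape S \<longleftrightarrow> finite S \<and> S \<noteq> {} \<and> (0, 0) \<in> S"

definition lin_indep2 :: "pt \<Rightarrow> pt \<Rightarrow> bool" where
  "lin_indep2 v1 v2 \<longleftrightarrow> fst v1 * snd v2 - snd v1 * fst v2 \<noteq> 0"

definition lattice :: "pt \<Rightarrow> pt \<Rightarrow> pt set" where
  "lattice v1 v2 = {(u1 * fst v1 + u2 * fst v2, u1 * snd v1 + u2 * snd v2) | u1 u2. True}"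

definition translate :: "pt set \<Rightarrow> pt \<Rightarrow> pt set" where
  "translate S l = (\<lambda>x. padd x l) ` S"

definition lattice_tiling :: "pt set \<Rightarrow> pt set \<Rightarrow> bool" where
  "lattice_tiling L S \<longleftrightarrow>
     (\<forall>l1\<in>L. \<forall>l2\<in>L. l1 \<noteq> l2 \<longrightarrow> translate S l1 \<inter> translate S l2 = {}) \<and>
     (\<forall>x. \<exists>l\<in>L. x \<in> translate S l)"

definition tcenter :: "pt set \<Rightarrow> pt set \<Rightarrow> pt \<Rightarrow> pt" where
  "tcenter L S x = (THE l. l \<in> L \<and> x \<in> translate S l)"

primrec folded_row :: "pt set \<Rightarrow> pt set \<Rightarrow> pt \<Rightarrow> nat \<Rightarrow> pt" where
  "folded_row L S d 0 = (0, 0)"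
| "folded_row L S d (Suc k) =
     psub (padd (folded_row L S d k) d) (tcenter L S (padd (folded_row L S d k) d))"

definition ternary_nonzero :: "pt \<Rightarrow> bool" where
  "ternary_nonzero d \<longleftrightarrow> fst d \<in> {-1, 0, 1} \<and> snd d \<in> {-1, 0, 1} \<and> d \<noteq> (0, 0)"

definition is_folding :: "pt set \<Rightarrow> pt set \<Rightarrow> pt \<Rightarrow> bool" where
  "is_folding L S d \<longleftrightarrow> (\<forall>x\<in>S. \<exists>i. folded_row L S d i = x)"

text \<open>The folded array extended periodically: f(p_i + l) = s_i.\<close>
definition folded_array :: "pt set \<Rightarrow> pt set \<Rightarrow> pt \<Rightarrow> (nat \<Rightarrow> nat) \<Rightarrow> pt \<Rightarrow> nat" where
  "folded_array L S d s x = s (LEAST i. folded_row L S d i = psub x (tcenter L S x))"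

definition window_property ::
  "pt set \<Rightarrow> pt set \<Rightarrow> pt \<Rightarrow> (nat \<Rightarrow> nat) \<Rightarrow> nat \<Rightarrow> nat \<Rightarrow> bool" where
  "window_property L S d s k1 k2 \<longleftrightarrow>
     (\<forall>M :: nat \<Rightarrow> nat \<Rightarrow> nat.
        (\<forall>r<k1. \<forall>c<k2. M r c \<le> 1) \<longrightarrow> (\<exists>r<k1. \<exists>c<k2. M r c \<noteq> 0) \<longrightarrow>
        (\<exists>!x. x \<in> S \<and>
           (\<forall>r<k1. \<forall>c<k2. folded_array L S d s (padd x (int r, int c)) = M r c)))"

definition least_period :: "(nat \<Rightarrow> nat) \<Rightarrow> nat \<Rightarrow> bool" where
  "least_period s n \<longleftrightarrow> 0 < n \<and> (\<forall>i. s (i + n) = s i) \<and>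
     (\<forall>p. 0 < p \<and> p < n \<longrightarrow> \<not> (\<forall>i. s (i + p) = s i))"

definition m_sequence :: "(nat \<Rightarrow> nat) \<Rightarrow> nat \<Rightarrow> bool" where
  "m_sequence s n \<longleftrightarrow> (\<forall>i. s i \<le> 1) \<and>
     (\<exists>m (c :: nat \<Rightarrow> nat). (\<forall>j<m. c j \<le> 1) \<and> n = 2 ^ m - 1 \<and>
        (\<forall>i. s (i + m) = (\<Sum>j<m. c j * s (i + j)) mod 2)) \<and>
     least_period s n"

end

theory Submission
  imports Defs
begin

(* Folding with respect to a lattice L only depends on residues modulo L:
   the folded-row point p_i is the representative in the tile S of the point i*d, so
   p_i equals the representative of x exactly when i*d and x are congruent modulo L.
   Hence the periodically extended folded array is f(x) = s(least i with i*d = x mod L),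
   a function that does not mention the tile at all.  Two shapes tiled by the same
   lattice therefore carry the SAME array on Z^2, and since every window content is
   invariant under lattice translations, a content occurs exactly once with anchor in
   one fundamental domain iff it does so in any other. *)

definition additive_subgroup :: "pt set \<Rightarrow> bool" where
  "additive_subgroup L \<longleftrightarrow> (0, 0) \<in> L \<and> (\<forall>a\<in>L. \<forall>b\<in>L. psub a b \<in> L)"

text \<open>A lattice is closed under subtraction, which is all that is used about it.\<close>
lemma additive_subgroup_lattice: "additive_subgroup (lattice v1 v2)"
proof -
  let ?pt = "\<lambda>u1 u2. (u1 * fst v1 + u2 * fst v2, u1 * snd v1 + u2 * snd v2) :: pt"
  have lattice_eq: "lattice v1 v2 = {?pt u1 u2 | u1 u2. True}"
    unfolding lattice_def by simp
  have diff: "psub (?pt a1 a2) (?pt b1 b2) = ?pt (a1 - b1) (a2 - b2)" for a1 a2 b1 b2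
    by (simp add: psub_def algebra_simps)
  show ?thesis
    unfolding additive_subgroup_def lattice_eq
  proof (intro conjI ballI)
    have "(0, 0) = ?pt 0 0" by simp
    then show "(0, 0) \<in> {?pt u1 u2 | u1 u2. True}" by blast
    fix a b assume "a \<in> {?pt u1 u2 | u1 u2. True}" "b \<in> {?pt u1 u2 | u1 u2. True}"
    then obtain a1 a2 b1 b2 where "a = ?pt a1 a2" "b = ?pt b1 b2" by blast
    then have "psub a b = ?pt (a1 - b1) (a2 - b2)" using diff by simp
    then show "psub a b \<in> {?pt u1 u2 | u1 u2. True}" by blast
  qed
qed

lemma additive_subgroup_neg:
  "additive_subgroup L \<Longrightarrow> a \<in> L \<Longrightarrow> (- fst a, - snd a) \<in> L"
  unfolding additive_subgroup_def by (metis diff_0 fst_conv psub_def snd_conv)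

lemma additive_subgroup_add:
  assumes "additive_subgroup L" "a \<in> L" "b \<in> L"
  shows "padd a b \<in> L"
proof -
  have "psub a (- fst b, - snd b) \<in> L"
    using assms additive_subgroup_neg[OF assms(1,3)] unfolding additive_subgroup_def by blast
  then show ?thesis by (simp add: psub_def padd_def)
qed

definition cong_mod :: "pt set \<Rightarrow> pt \<Rightarrow> pt \<Rightarrow> bool" where
  "cong_mod L x y \<longleftrightarrow> psub x y \<in> L"

lemma cong_mod_refl: "additive_subgroup L \<Longrightarrow> cong_mod L x x"
  by (simp add: additive_subgroup_def cong_mod_def psub_def)

lemma cong_mod_sym: "additive_subgroup L \<Longrightarrow> cong_mod L x y \<Longrightarrow> cong_mod L y x"
  using additive_subgroup_neg[of L "psub x y"] by (simp add: cong_mod_def psub_def)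

lemma cong_mod_trans:
  "additive_subgroup L \<Longrightarrow> cong_mod L x y \<Longrightarrow> cong_mod L y z \<Longrightarrow> cong_mod L x z"
  using additive_subgroup_add[of L "psub x y" "psub y z"]
  by (simp add: cong_mod_def psub_def padd_def)

lemma cong_mod_padd: "cong_mod L x y \<Longrightarrow> cong_mod L (padd x w) (padd y w)"
  by (simp add: cong_mod_def psub_def padd_def)

lemma mem_translate_iff: "x \<in> translate S l \<longleftrightarrow> psub x l \<in> S"
proof
  assume "x \<in> translate S l"
  then show "psub x l \<in> S" by (auto simp: translate_def padd_def psub_def)
next
  assume "psub x l \<in> S"
  moreover have "x = padd (psub x l) l" by (simp add: padd_def psub_def)
  ultimately show "x \<in> translate S l" unfolding translate_def by blast
qed

lemma tcenter_spec:
  assumes "lattice_tiling L S"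
  shows "tcenter L S x \<in> L \<and> x \<in> translate S (tcenter L S x)"
proof -
  have "\<exists>!l. l \<in> L \<and> x \<in> translate S l"
    using assms unfolding lattice_tiling_def by blast
  then show ?thesis unfolding tcenter_def by (rule theI')
qed

definition rep :: "pt set \<Rightarrow> pt set \<Rightarrow> pt \<Rightarrow> pt" where
  "rep L S x = psub x (tcenter L S x)"

lemma rep_mem: "lattice_tiling L S \<Longrightarrow> rep L S x \<in> S"
  using tcenter_spec[of L S x] mem_translate_iff by (simp add: rep_def)

lemma rep_cong: "lattice_tiling L S \<Longrightarrow> cong_mod L x (rep L S x)"
  using tcenter_spec[of L S x] by (simp add: rep_def cong_mod_def psub_def)

text \<open>Distinct points of a tile are incongruent (disjointness of the translates).\<close>
lemma tile_cong_eq: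
  assumes tiling: "lattice_tiling L S" and L: "additive_subgroup L"
    and "a \<in> S" "b \<in> S" and "cong_mod L a b"
  shows "a = b"
proof (rule ccontr)
  assume "a \<noteq> b"
  then have shift_nonzero: "psub a b \<noteq> (0, 0)" by (auto simp: psub_def prod_eq_iff)
  have "a \<in> translate S (0, 0)" "a \<in> translate S (psub a b)"
    using \<open>a \<in> S\<close> \<open>b \<in> S\<close> by (simp_all add: mem_translate_iff psub_def)
  moreover have "psub a b \<in> L" "(0, 0) \<in> L"
    using \<open>cong_mod L a b\<close> L by (simp_all add: cong_mod_def additive_subgroup_def)
  ultimately show False
    using tiling shift_nonzero unfolding lattice_tiling_def by blast
qed

lemma eq_rep_iff:
  assumes tiling: "lattice_tiling L S" and L: "additive_subgroup L" and "a \<in> S"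
  shows "a = rep L S x \<longleftrightarrow> cong_mod L a x"
proof
  assume "a = rep L S x"
  then show "cong_mod L a x"
    using rep_cong[OF tiling, of x] cong_mod_sym[OF L] by simp
next
  assume "cong_mod L a x"
  then have "cong_mod L a (rep L S x)"
    using rep_cong[OF tiling, of x] cong_mod_trans[OF L] by blast
  then show "a = rep L S x"
    using tile_cong_eq[OF tiling L \<open>a \<in> S\<close> rep_mem[OF tiling]] by blast
qed

definition scale :: "nat \<Rightarrow> pt \<Rightarrow> pt" where
  "scale i d = (int i * fst d, int i * snd d)"

lemma folded_row_mem_cong:
  assumes tiling: "lattice_tiling L S" and L: "additive_subgroup L" and "(0, 0) \<in> S"
  shows "folded_row L S d i \<in> S \<and> cong_mod L (scale i d) (folded_row L S d i)"
proof (induction i)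
  case 0
  then show ?case using \<open>(0, 0) \<in> S\<close> cong_mod_refl[OF L] by (simp add: scale_def)
next
  case (Suc i)
  let ?q = "padd (folded_row L S d i) d"
  have step: "folded_row L S d (Suc i) = rep L S ?q" by (simp add: rep_def)
  have "scale (Suc i) d = padd (scale i d) d" by (simp add: scale_def padd_def algebra_simps)
  then have "cong_mod L (scale (Suc i) d) ?q"
    using cong_mod_padd Suc.IH by metis
  then show ?case
    using step rep_mem[OF tiling] rep_cong[OF tiling] cong_mod_trans[OF L] by metis
qed

lemma folded_row_eq_rep_iff:
  assumes "lattice_tiling L S" "additive_subgroup L" "(0, 0) \<in> S"
  shows "folded_row L S d i = rep L S x \<longleftrightarrow> cong_mod L (scale i d) x"
proof -
  have p: "folded_row L S d i \<in> S" "cong_mod L (scale i d) (folded_row L S d i)"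
    using folded_row_mem_cong[OF assms] by blast+
  have "cong_mod L (folded_row L S d i) x \<longleftrightarrow> cong_mod L (scale i d) x"
    using p(2) cong_mod_sym[OF assms(2)] cong_mod_trans[OF assms(2)] by blast
  then show ?thesis using eq_rep_iff[OF assms(1,2) p(1)] by simp
qed

text \<open>Closed form of the folded array: it depends on the lattice but not on the tile.\<close>
lemma folded_array_eq:
  assumes "lattice_tiling L S" "additive_subgroup L" "(0, 0) \<in> S"
  shows "folded_array L S d s x = s (LEAST i. cong_mod L (scale i d) x)"
  unfolding folded_array_def using folded_row_eq_rep_iff[OF assms] by (simp add: rep_def)

lemma folded_array_periodic:
  assumes "lattice_tiling L S" "additive_subgroup L" "(0, 0) \<in> S" and "cong_mod L x y"
  shows "folded_array L S d s x = folded_array L S d s y"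
proof -
  have "cong_mod L (scale i d) x \<longleftrightarrow> cong_mod L (scale i d) y" for i
    using assms(4) cong_mod_sym[OF assms(2)] cong_mod_trans[OF assms(2)] by blast
  then show ?thesis using folded_array_eq[OF assms(1-3)] by simp
qed

lemma unique_witness_transfer:
  assumes tS: "lattice_tiling L S" and tA: "lattice_tiling L A" and L: "additive_subgroup L"
    and invariant: "\<And>x y. cong_mod L x y \<Longrightarrow> W x \<Longrightarrow> W y"
    and "\<exists>!x. x \<in> S \<and> W x"
  shows "\<exists>!x. x \<in> A \<and> W x"
proof -
  from \<open>\<exists>!x. x \<in> S \<and> W x\<close> obtain x
    where x: "x \<in> S" "W x" and unique: "\<And>z. z \<in> S \<Longrightarrow> W z \<Longrightarrow> z = x" by blast
  let ?y = "rep L A x"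
  have y: "?y \<in> A" "W ?y" using rep_mem[OF tA] rep_cong[OF tA] invariant x by blast+
  show ?thesis
  proof (rule ex1I[of _ ?y])
    show "?y \<in> A \<and> W ?y" using y by blast
  next
    fix z assume z: "z \<in> A \<and> W z"
    have "rep L S z = x" using unique rep_mem[OF tS] rep_cong[OF tS] invariant z by blast
    then have "cong_mod L z x" using rep_cong[OF tS, of z] by simp
    then have "cong_mod L z ?y" using rep_cong[OF tA, of x] cong_mod_trans[OF L] by blast
    then show "z = ?y" using tile_cong_eq[OF tA L] z y by blast
  qed
qed

lemma window_property_tile_independent:
  assumes tS: "lattice_tiling L S" and tA: "lattice_tiling L A" and L: "additive_subgroup L"
    and "(0, 0) \<in> S" "(0, 0) \<in> A"
  shows "window_property L S d s k1 k2 \<longleftrightarrow> window_property L A d s k1 k2"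
proof -
  let ?f = "folded_array L A d s"
  have same_array: "folded_array L S d s = ?f"
    using folded_array_eq[OF tS L \<open>(0, 0) \<in> S\<close>] folded_array_eq[OF tA L \<open>(0, 0) \<in> A\<close>]
    by (intro ext) simp
  define shows_window where
    "shows_window M x \<longleftrightarrow> (\<forall>r<k1. \<forall>c<k2. ?f (padd x (int r, int c)) = M r c)" for M x
  have invariant: "shows_window M y" if "cong_mod L x y" "shows_window M x" for M x y
  proof -
    have "?f (padd x w) = ?f (padd y w)" for w
      using folded_array_periodic[OF tA L \<open>(0, 0) \<in> A\<close> cong_mod_padd[OF \<open>cong_mod L x y\<close>]] .
    then show ?thesis using \<open>shows_window M x\<close> unfolding shows_window_def by simp
  qed
  have "(\<exists>!x. x \<in> S \<and> shows_window M x) \<longleftrightarrow> (\<exists>!x. x \<in> A \<and> shows_window M x)" for M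
    using unique_witness_transfer[OF tS tA L, of "shows_window M"]
      unique_witness_transfer[OF tA tS L, of "shows_window M"] invariant
    by blast
  then show ?thesis unfolding window_property_def same_array shows_window_def by simp
qed

theorem mainTheorem11:
  fixes k1 k2 n n1 n2 :: nat and v1 v2 d :: pt and S :: "pt set" and s :: "nat \<Rightarrow> nat"
  assumes "k1 \<ge> 1" and "k2 \<ge> 1"
    and "n = 2 ^ (k1 * k2) - 1"
    and "n = n1 * n2" and "n1 > 1" and "n2 > 1" and "coprime n1 n2"
    and "lin_indep2 v1 v2"
    and "is_shape S"
    and "lattice_tiling (lattice v1 v2) ({0..<int n1} \<times> {0..<int n2})"
    and "lattice_tiling (lattice v1 v2) S"
    and "ternary_nonzero d"
    and "is_folding (lattice v1 v2) S d"
    and "m_sequence s n"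
  shows "window_property (lattice v1 v2) S d s k1 k2 \<longleftrightarrow>
         window_property (lattice v1 v2) ({0..<int n1} \<times> {0..<int n2}) d s k1 k2"
proof -
  have "(0, 0) \<in> S" using \<open>is_shape S\<close> by (simp add: is_shape_def)
  moreover have "(0, 0) \<in> {0..<int n1} \<times> {0..<int n2}" using \<open>n1 > 1\<close> \<open>n2 > 1\<close> by simp
  ultimately show ?thesis
    using window_property_tile_independent[OF assms(11,10) additive_subgroup_lattice] by blast
qed

end
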